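(* For every set $X=\{X^1,\dots,X^m\}\subseteq S_n$ of $m\ge1$ distinct elements, $$\Big|\bigcap_{i=1}^m\mathrm{Elim}(\{X^i\})\Big|=3^{z_X}\Big(-(-2)^{m-1}+\sum_{\alpha\in S_m}(-1)^{z(\alpha)}\,2^{\,z(\alpha)+|\mathrm{BSp}(X,\alpha)|}\Big).$$
   Context: $S_n$ is the set of all nonzero $n$-tuples in $\{-1,0,1\}^n$ whose first nonzero entry equals $1$. A tuple $t=(t_1,\dots,t_n)\in\{1,0,-1,u\}^n$ ($u$ a formal symbol) eliminates $s\in S_n$ if: (i) $t_i\neq0$ and $s_i\neq0$ for some $i$; (ii) there is $k\in\{+1,-1\}$ with $t_i=ks_i$ for all $i$ with $s_i\neq0$ and $t_i\neq0$; (iii) $s_i=0$ whenever $t_i=u$. For $X\subseteq S_n$, $\mathrm{Elim}(X)$ is the set of elements of $S_n$ eliminated by at least one element of $X$. $M_X$ is the $m\times n$ matrix whose $i$-th row is $X^i$; $z_X$ is the number of zero columns of $M_X$. For a tuple $\alpha$, $z(\alpha)$ is the number of its zero coordinates. For $\alpha\in S_m$, $\mathrm{BSp}(X,\alpha)$ is the set of indices $c\in\{1,\dots,n\}$ such that the $c$-th column of $M_X$ is nonzero and equals $\pm(a_1\alpha_1,\dots,a_m\alpha_m)^T$ for some $(a_1,\dots,a_m)\in\{0,1\}^m\setminus\{(0,\dots,0)\}$. *)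

theory Defs
  imports Main
begin

text \<open>n-tuples are lists of length n (index 0..n-1). Entries of tuples t in
{1,0,-1,u}^n are int options, with None playing the role of the formal symbol u.\<close>

definition S :: "nat \<Rightarrow> int list set" where
  "S n = {s. length s = n \<and> set s \<subseteq> {-1, 0, 1} \<and> s \<noteq> replicate n 0
              \<and> (\<exists>j<n. s ! j = 1 \<and> (\<forall>i<j. s ! i = 0))}"

definition eliminates :: "nat \<Rightarrow> int option list \<Rightarrow> int list \<Rightarrow> bool" where
  "eliminates n t s \<longleftrightarrow>
     (\<exists>i<n. t ! i \<noteq> Some 0 \<and> s ! i \<noteq> 0) \<and>
     (\<exists>k\<in>{1, -1::int}. \<forall>i<n. s ! i \<noteq> 0 \<and> t ! i \<noteq> Some 0 \<longrightarrow> t ! i = Some (k * s ! i)) \<and>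
     (\<forall>i<n. t ! i = None \<longrightarrow> s ! i = 0)"

definition Elim :: "nat \<Rightarrow> int list set \<Rightarrow> int list set" where
  "Elim n X = {s \<in> S n. \<exists>x\<in>X. eliminates n (map Some x) s}"

definition zX :: "nat \<Rightarrow> nat \<Rightarrow> (nat \<Rightarrow> int list) \<Rightarrow> nat" where
  "zX m n X = card {c. c < n \<and> (\<forall>i<m. X i ! c = 0)}"

definition zeros :: "int list \<Rightarrow> nat" where
  "zeros \<alpha> = card {i. i < length \<alpha> \<and> \<alpha> ! i = 0}"

definition BSp :: "nat \<Rightarrow> nat \<Rightarrow> (nat \<Rightarrow> int list) \<Rightarrow> int list \<Rightarrow> nat set" where
  "BSp m n X \<alpha> = {c. c < n \<and> (\<exists>i<m. X i ! c \<noteq> 0) \<and>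
     (\<exists>a::nat \<Rightarrow> int. (\<forall>i<m. a i \<in> {0, 1}) \<and> (\<exists>i<m. a i \<noteq> 0) \<and>
        (\<exists>k\<in>{1, -1::int}. \<forall>i<m. X i ! c = k * (a i * \<alpha> ! i)))}"

end

theory Submission imports Defs begin

text \<open>For a fixed row \<open>x\<close>, the indicator of "\<open>x\<close> eliminates \<open>s\<close>" equals
  \<open>\<Sum>v\<in>{-1,0,1}. w v \<cdot> [s is v-admissible for x]\<close> with \<open>w 0 = -2\<close>, \<open>w (\<plusminus>1) = 1\<close>:
  if the supports of \<open>x\<close> and \<open>s\<close> are disjoint, all three values are admissible and the
  weights cancel; otherwise \<open>0\<close> is not admissible and at most one sign is.
  Multiplying over the \<open>m\<close> rows and expanding turns the count into a sum over
  \<open>\<alpha> \<in> {-1,0,1}\<^sup>m\<close>. For fixed \<open>\<alpha>\<close> the admissibility conditions decouple into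
  independent conditions on the columns of \<open>M_X\<close>: a zero column allows 3 entries of \<open>s\<close>,
  a column in \<open>BSp(X,\<alpha>)\<close> allows 2, every other column 1. Both sides are invariant
  under \<open>s \<mapsto> -s\<close> and \<open>\<alpha> \<mapsto> -\<alpha>\<close>, which halves the sums over all ternary vectors to sums
  over \<open>S\<close>; the term \<open>\<alpha> = 0\<close> contributes \<open>(-2)\<^sup>m 3\<^bsup>z_X\<^esup>\<close>.\<close>

lemma sum_lists_prod_nth:
  fixes w :: "nat \<Rightarrow> 'b \<Rightarrow> 'a::comm_semiring_1"
  assumes "finite D"
  shows "(\<Sum>xs\<in>{xs. set xs \<subseteq> D \<and> length xs = m}. \<Prod>i<m. w i (xs ! i)) = (\<Prod>i<m. \<Sum>v\<in>D. w i v)"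
proof (induction m arbitrary: w)
  case 0
  have "{xs. set xs \<subseteq> D \<and> length xs = 0} = {[]}" by auto
  then show ?case by simp
next
  case (Suc m)
  let ?Lm = "{xs. set xs \<subseteq> D \<and> length xs = m}"
  have inj: "inj_on (\<lambda>(xs, v). v # xs) (?Lm \<times> D)"
    by (auto simp: inj_on_def)
  have "(\<Sum>xs\<in>{xs. set xs \<subseteq> D \<and> length xs = Suc m}. \<Prod>i<Suc m. w i (xs ! i))
      = (\<Sum>(xs, v)\<in>?Lm \<times> D. \<Prod>i<Suc m. w i ((v # xs) ! i))"
    unfolding lists_length_Suc_eq by (subst sum.reindex[OF inj]) (simp add: case_prod_beta)
  also have "\<dots> = (\<Sum>xs\<in>?Lm. \<Sum>v\<in>D. w 0 v * (\<Prod>i<m. w (Suc i) (xs ! i)))"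
    by (subst sum.cartesian_product[symmetric])
      (simp del: prod.lessThan_Suc add: prod.lessThan_Suc_shift)
  also have "\<dots> = (\<Sum>v\<in>D. w 0 v) * (\<Sum>xs\<in>?Lm. \<Prod>i<m. w (Suc i) (xs ! i))"
    by (simp add: sum_distrib_right sum_distrib_left mult.commute sum.swap[of _ D])
  also have "\<dots> = (\<Sum>v\<in>D. w 0 v) * (\<Prod>i<m. \<Sum>v\<in>D. w (Suc i) v)"
    using Suc[of "\<lambda>i. w (Suc i)"] by simp
  also have "\<dots> = (\<Prod>i<Suc m. \<Sum>v\<in>D. w i v)"
    by (simp del: prod.lessThan_Suc add: prod.lessThan_Suc_shift)
  finally show ?case .
qed

lemma prod_of_bool: "finite A \<Longrightarrow> (\<Prod>i\<in>A. of_bool (P i)) = (of_bool (\<forall>i\<in>A. P i) :: 'a::comm_semiring_1)"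
  by (induction A rule: finite_induct) auto

lemma prod_if_eq_power:
  "finite A \<Longrightarrow> (\<Prod>i\<in>A. if P i then a else 1) = (a::'a::comm_monoid_mult) ^ card {i\<in>A. P i}"
  by (simp add: prod.If_cases Int_def conj_commute)

abbreviation ternary_lists :: "nat \<Rightarrow> int list set" where
  "ternary_lists n \<equiv> {xs. set xs \<subseteq> {-1, 0, 1} \<and> length xs = n}"

lemma finite_ternary_lists: "finite (ternary_lists n)"
  using finite_lists_length_eq[of "{-1, 0, 1::int}" n] by simp

lemma S_subset_ternary_lists: "S n \<subseteq> ternary_lists n"
  by (auto simp: S_def)

lemma finite_S: "finite (S n)"
  using finite_subset[OF S_subset_ternary_lists finite_ternary_lists] .

lemma replicate_zero_notin_S: "replicate n 0 \<notin> S n"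
  by (auto simp: S_def)

lemma S_disjoint_uminus_S: "S n \<inter> map uminus ` S n = {}"
proof (rule ccontr)
  assume "S n \<inter> map uminus ` S n \<noteq> {}"
  then obtain s where "s \<in> S n" "map uminus s \<in> S n" by blast
  then obtain j j' where j: "s ! j = 1" "\<forall>i<j. s ! i = 0" "j < length s"
    and j': "- (s ! j') = 1" "\<forall>i<j'. - (s ! i) = 0" "j' < length s"
    by (auto simp: S_def)
  then show False
    by (cases j j' rule: linorder_cases) force+
qed

lemma ternary_lists_eq: "ternary_lists n = insert (replicate n 0) (S n \<union> map uminus ` S n)"
proof
  show "insert (replicate n 0) (S n \<union> map uminus ` S n) \<subseteq> ternary_lists n"
    using S_subset_ternary_lists[of n] by fastforce
next
  show "ternary_lists n \<subseteq> insert (replicate n 0) (S n \<union> map uminus ` S n)"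
  proof
    fix s assume s: "s \<in> ternary_lists n"
    show "s \<in> insert (replicate n 0) (S n \<union> map uminus ` S n)"
    proof (cases "\<exists>j<n. s ! j \<noteq> 0")
      case False
      then have "s = replicate n 0" using s by (auto intro: nth_equalityI)
      then show ?thesis by simp
    next
      case True
      define j where "j = (LEAST j. j < n \<and> s ! j \<noteq> 0)"
      have j: "j < n" "s ! j \<noteq> 0" using LeastI_ex[OF True] unfolding j_def by auto
      have before: "\<forall>i<j. s ! i = 0"
        using not_less_Least[where P = "\<lambda>j. j < n \<and> s ! j \<noteq> 0"] j(1) unfolding j_def
        by (meson order.strict_trans)
      have "s ! j \<in> {-1, 0, 1}" using s j(1) nth_mem[of j s] by blast
      then consider "s ! j = 1" | "s ! j = -1" using j(2) by auto
      then show ?thesis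
      proof cases
        case 1
        moreover have "s \<noteq> replicate n 0" using j by auto
        ultimately have "s \<in> S n" using s j before unfolding S_def by auto
        then show ?thesis by simp
      next
        case 2
        then have "map uminus s \<in> S n"
          unfolding S_def using s j before by (auto intro!: exI[of _ j] simp: list_eq_iff_nth_eq)
        moreover have "s = map uminus (map uminus s)" by (simp add: comp_def)
        ultimately show ?thesis by blast
      qed
    qed
  qed
qed

lemma sum_ternary_lists_even:
  fixes f :: "int list \<Rightarrow> 'a::comm_semiring_1"
  assumes even: "\<And>s. s \<in> S n \<Longrightarrow> f (map uminus s) = f s"
  shows "(\<Sum>s\<in>ternary_lists n. f s) = f (replicate n 0) + 2 * (\<Sum>s\<in>S n. f s)"
proof -
  have inj: "inj_on (map uminus) (S n)" by (auto simp: inj_on_def)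
  have "replicate n 0 \<notin> map uminus ` S n"
  proof
    assume "replicate n 0 \<in> map uminus ` S n"
    then obtain s where "s \<in> S n" "map uminus s = replicate n 0" by auto
    then have "s = map uminus (replicate n 0)"
      by (metis (no_types) list.map_comp map_idI comp_apply minus_minus)
    with \<open>s \<in> S n\<close> show False using replicate_zero_notin_S[of n] by simp
  qed
  then have "(\<Sum>s\<in>ternary_lists n. f s) = f (replicate n 0) + (\<Sum>s\<in>S n \<union> map uminus ` S n. f s)"
    unfolding ternary_lists_eq using replicate_zero_notin_S[of n] finite_S[of n] by simp
  also have "\<dots> = f (replicate n 0) + ((\<Sum>s\<in>S n. f s) + (\<Sum>s\<in>S n. f (map uminus s)))"
    using finite_S[of n] S_disjoint_uminus_S[of n] by (simp add: sum.union_disjoint sum.reindex[OF inj])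
  finally show ?thesis using even by (simp add: mult_2)
qed

definition disjoint_support :: "nat \<Rightarrow> int list \<Rightarrow> int list \<Rightarrow> bool" where
  "disjoint_support n x s \<longleftrightarrow> (\<forall>c<n. s ! c = 0 \<or> x ! c = 0)"

definition proportional_on_overlap :: "nat \<Rightarrow> int list \<Rightarrow> int list \<Rightarrow> int \<Rightarrow> bool" where
  "proportional_on_overlap n x s k \<longleftrightarrow> (\<forall>c<n. s ! c \<noteq> 0 \<and> x ! c \<noteq> 0 \<longrightarrow> x ! c = k * s ! c)"

definition eliminates_row :: "nat \<Rightarrow> int list \<Rightarrow> int list \<Rightarrow> bool" where
  "eliminates_row n x s \<longleftrightarrow>
     \<not> disjoint_support n x s \<and> (proportional_on_overlap n x s 1 \<or> proportional_on_overlap n x s (-1))"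

definition admissible :: "nat \<Rightarrow> int list \<Rightarrow> int list \<Rightarrow> int \<Rightarrow> bool" where
  "admissible n x s v = (if v = 0 then disjoint_support n x s else proportional_on_overlap n x s v)"

definition column_admissible :: "nat \<Rightarrow> (nat \<Rightarrow> int list) \<Rightarrow> int list \<Rightarrow> nat \<Rightarrow> int \<Rightarrow> bool" where
  "column_admissible m X \<alpha> c v \<longleftrightarrow> (\<forall>i<m. v \<noteq> 0 \<and> X i ! c \<noteq> 0 \<longrightarrow> \<alpha> ! i \<noteq> 0 \<and> X i ! c = \<alpha> ! i * v)"

lemma eliminates_map_Some_iff:
  "length x = n \<Longrightarrow> eliminates n (map Some x) s \<longleftrightarrow> eliminates_row n x s"
  unfolding eliminates_def eliminates_row_def disjoint_support_def proportional_on_overlap_def by auto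

lemma of_bool_eliminates_row:
  "(of_bool (eliminates_row n x s) :: int) =
     (\<Sum>v\<in>{-1, 0, 1}. (if v = 0 then -2 else 1) * of_bool (admissible n x s v))"
proof -
  have "disjoint_support n x s \<Longrightarrow> proportional_on_overlap n x s k" for k
    unfolding disjoint_support_def proportional_on_overlap_def by auto
  moreover have "proportional_on_overlap n x s 1 \<Longrightarrow> proportional_on_overlap n x s (-1) \<Longrightarrow>
      disjoint_support n x s"
    unfolding disjoint_support_def proportional_on_overlap_def by force
  ultimately show ?thesis
    by (auto simp: admissible_def eliminates_row_def simp del: sum_mult_of_bool_eq)
qed

lemma admissible_rows_iff_columns:
  "(\<forall>i<m. admissible n (X i) s (\<alpha> ! i)) \<longleftrightarrow> (\<forall>c<n. column_admissible m X \<alpha> c (s ! c))"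
  unfolding admissible_def disjoint_support_def proportional_on_overlap_def column_admissible_def
  by (auto split: if_splits simp: mult.commute)

lemma mem_BSp_iff:
  "c \<in> BSp m n X \<alpha> \<longleftrightarrow>
     c < n \<and> (\<exists>i<m. X i ! c \<noteq> 0) \<and> (column_admissible m X \<alpha> c 1 \<or> column_admissible m X \<alpha> c (-1))"
proof
  assume "c \<in> BSp m n X \<alpha>"
  then obtain a k where c: "c < n" "\<exists>i<m. X i ! c \<noteq> 0" "\<forall>i<m. a i \<in> {0, 1::int}"
    "k \<in> {1, -1::int}" "\<forall>i<m. X i ! c = k * (a i * \<alpha> ! i)"
    unfolding BSp_def by blast
  then have "column_admissible m X \<alpha> c k"
    unfolding column_admissible_def by fastforce
  then show "c < n \<and> (\<exists>i<m. X i ! c \<noteq> 0) \<and>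
      (column_admissible m X \<alpha> c 1 \<or> column_admissible m X \<alpha> c (-1))"
    using c by auto
next
  assume c: "c < n \<and> (\<exists>i<m. X i ! c \<noteq> 0) \<and>
      (column_admissible m X \<alpha> c 1 \<or> column_admissible m X \<alpha> c (-1))"
  then obtain k where k: "k \<in> {1, -1::int}" "column_admissible m X \<alpha> c k" by blast
  define a where "a i = (if X i ! c \<noteq> 0 then 1 else 0::int)" for i
  have "\<forall>i<m. X i ! c = k * (a i * \<alpha> ! i)"
    using k unfolding a_def column_admissible_def by auto
  moreover have "\<forall>i<m. a i \<in> {0, 1}" "\<exists>i<m. a i \<noteq> 0"
    using c unfolding a_def by auto
  ultimately show "c \<in> BSp m n X \<alpha>"
    unfolding BSp_def using c k by blast
qed

lemma count_column_admissible:
  assumes "c < n"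
  shows "(\<Sum>v\<in>{-1, 0, 1}. of_bool (column_admissible m X \<alpha> c v)) =
     (if \<forall>i<m. X i ! c = 0 then 3 else 1) * (if c \<in> BSp m n X \<alpha> then 2 else (1::int))"
proof (cases "\<forall>i<m. X i ! c = 0")
  case True
  then have "column_admissible m X \<alpha> c v" for v
    unfolding column_admissible_def by auto
  moreover have "c \<notin> BSp m n X \<alpha>" using True mem_BSp_iff by blast
  ultimately show ?thesis using True by simp
next
  case False
  have "column_admissible m X \<alpha> c 0"
    unfolding column_admissible_def by auto
  moreover have "\<not> (column_admissible m X \<alpha> c 1 \<and> column_admissible m X \<alpha> c (-1))"
    using False unfolding column_admissible_def by force
  moreover have "c \<in> BSp m n X \<alpha> \<longleftrightarrow> column_admissible m X \<alpha> c 1 \<or> column_admissible m X \<alpha> c (-1)"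
    using mem_BSp_iff assms False by blast
  ultimately show ?thesis using False by auto
qed

lemma count_admissible:
  "(\<Sum>s\<in>ternary_lists n. of_bool (\<forall>i<m. admissible n (X i) s (\<alpha> ! i))) =
     (3::int) ^ zX m n X * 2 ^ card (BSp m n X \<alpha>)"
proof -
  have "(\<Sum>s\<in>ternary_lists n. of_bool (\<forall>i<m. admissible n (X i) s (\<alpha> ! i))) =
      (\<Sum>s\<in>ternary_lists n. \<Prod>c<n. of_bool (column_admissible m X \<alpha> c (s ! c)) :: int)"
    by (simp add: admissible_rows_iff_columns prod_of_bool lessThan_iff Ball_def del: sum_of_bool_eq)
  also have "\<dots> = (\<Prod>c<n. \<Sum>v\<in>{-1, 0, 1}. of_bool (column_admissible m X \<alpha> c v))"
    by (rule sum_lists_prod_nth) simp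
  also have "\<dots> = (\<Prod>c<n. (if \<forall>i<m. X i ! c = 0 then 3 else 1) * (if c \<in> BSp m n X \<alpha> then 2 else 1))"
    by (intro prod.cong refl count_column_admissible) simp
  also have "\<dots> = 3 ^ card {c\<in>{..<n}. \<forall>i<m. X i ! c = 0} * 2 ^ card {c\<in>{..<n}. c \<in> BSp m n X \<alpha>}"
    by (simp add: prod.distrib prod_if_eq_power)
  also have "{c\<in>{..<n}. c \<in> BSp m n X \<alpha>} = BSp m n X \<alpha>"
    by (auto simp: BSp_def)
  also have "{c\<in>{..<n}. \<forall>i<m. X i ! c = 0} = {c. c < n \<and> (\<forall>i<m. X i ! c = 0)}"
    by auto
  finally show ?thesis unfolding zX_def .
qed

lemma count_eliminated:
  "(\<Sum>s\<in>ternary_lists n. of_bool (\<forall>i<m. eliminates_row n (X i) s)) =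
     (3::int) ^ zX m n X * (\<Sum>\<alpha>\<in>ternary_lists m. (-2) ^ zeros \<alpha> * 2 ^ card (BSp m n X \<alpha>))"
proof -
  define w :: "int list \<Rightarrow> nat \<Rightarrow> int \<Rightarrow> int"
    where "w s i v = (if v = 0 then -2 else 1) * of_bool (admissible n (X i) s v)" for s i v
  have "(\<Sum>s\<in>ternary_lists n. of_bool (\<forall>i<m. eliminates_row n (X i) s)) =
      (\<Sum>s\<in>ternary_lists n. \<Prod>i<m. \<Sum>v\<in>{-1, 0, 1}. w s i v)"
    unfolding w_def of_bool_eliminates_row[symmetric]
    by (simp add: prod_of_bool lessThan_iff Ball_def del: sum_of_bool_eq)
  also have "\<dots> = (\<Sum>s\<in>ternary_lists n. \<Sum>\<alpha>\<in>ternary_lists m. \<Prod>i<m. w s i (\<alpha> ! i))"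
    by (subst sum_lists_prod_nth) simp_all
  also have "\<dots> = (\<Sum>\<alpha>\<in>ternary_lists m. \<Sum>s\<in>ternary_lists n. \<Prod>i<m. w s i (\<alpha> ! i))"
    by (rule sum.swap)
  also have "\<dots> = (\<Sum>\<alpha>\<in>ternary_lists m. (-2) ^ zeros \<alpha> *
      (\<Sum>s\<in>ternary_lists n. of_bool (\<forall>i<m. admissible n (X i) s (\<alpha> ! i))))"
  proof (rule sum.cong[OF refl])
    fix \<alpha> assume "\<alpha> \<in> ternary_lists m"
    then have "(\<Prod>i<m. if \<alpha> ! i = 0 then -2 else 1) = ((-2::int) ^ zeros \<alpha>)"
      by (simp add: prod_if_eq_power zeros_def)
    then show "(\<Sum>s\<in>ternary_lists n. \<Prod>i<m. w s i (\<alpha> ! i)) = (-2) ^ zeros \<alpha> *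
        (\<Sum>s\<in>ternary_lists n. of_bool (\<forall>i<m. admissible n (X i) s (\<alpha> ! i)))"
      unfolding w_def
      by (simp add: prod.distrib prod_of_bool lessThan_iff Ball_def sum_distrib_left del: sum_of_bool_eq)
  qed
  also have "\<dots> = 3 ^ zX m n X * (\<Sum>\<alpha>\<in>ternary_lists m. (-2) ^ zeros \<alpha> * 2 ^ card (BSp m n X \<alpha>))"
    by (simp add: count_admissible sum_distrib_left mult.left_commute del: sum_of_bool_eq)
  finally show ?thesis .
qed

lemma eliminates_row_uminus:
  "length s = n \<Longrightarrow> eliminates_row n x (map uminus s) \<longleftrightarrow> eliminates_row n x s"
  unfolding eliminates_row_def disjoint_support_def proportional_on_overlap_def by auto

lemma not_eliminates_row_replicate_zero: "\<not> eliminates_row n x (replicate n 0)"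
  unfolding eliminates_row_def disjoint_support_def by auto

lemma zeros_uminus: "zeros (map uminus \<alpha>) = zeros \<alpha>"
  unfolding zeros_def by (rule arg_cong[where f = card]) auto

lemma zeros_replicate_zero: "zeros (replicate m 0) = m"
proof -
  have "{i. i < m \<and> replicate m (0::int) ! i = 0} = {..<m}" by auto
  then show ?thesis unfolding zeros_def by simp
qed

lemma BSp_uminus: "length \<alpha> = m \<Longrightarrow> BSp m n X (map uminus \<alpha>) = BSp m n X \<alpha>"
proof -
  assume "length \<alpha> = m"
  then have "column_admissible m X (map uminus \<alpha>) c v = column_admissible m X \<alpha> c (-v)" for c v
    unfolding column_admissible_def by auto
  then show ?thesis using mem_BSp_iff[of _ m n X] by auto
qed

lemma BSp_replicate_zero: "BSp m n X (replicate m 0) = {}"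
  unfolding BSp_def by auto

lemma Inter_Elim_singletons:
  assumes "m > 0" and "\<forall>i<m. length (X i) = n"
  shows "(\<Inter>i\<in>{..<m}. Elim n {X i}) = {s \<in> S n. \<forall>i<m. eliminates_row n (X i) s}"
  using assms unfolding Elim_def by (auto simp: eliminates_map_Some_iff)

theorem mainTheorem12:
  fixes m n :: nat and X :: "nat \<Rightarrow> int list"
  assumes "m \<ge> 1"
    and "\<forall>i<m. X i \<in> S n"
    and "inj_on X {..<m}"
  shows "int (card (\<Inter>i\<in>{..<m}. Elim n {X i})) =
    3 ^ zX m n X * (- ((-2) ^ (m - 1)) +
      (\<Sum>\<alpha>\<in>S m. (-1) ^ zeros \<alpha> * 2 ^ (zeros \<alpha> + card (BSp m n X \<alpha>))))"
proof -
  define f :: "int list \<Rightarrow> int" where "f s = of_bool (\<forall>i<m. eliminates_row n (X i) s)" for s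
  define T :: "int list \<Rightarrow> int" where "T \<alpha> = (-2) ^ zeros \<alpha> * 2 ^ card (BSp m n X \<alpha>)" for \<alpha>
  have "0 < m" using assms(1) by simp
  have "\<forall>i<m. length (X i) = n" using assms(2) by (simp add: S_def)
  then have "2 * int (card (\<Inter>i\<in>{..<m}. Elim n {X i})) = 2 * (\<Sum>s\<in>S n. f s)"
    using \<open>0 < m\<close> by (simp add: Inter_Elim_singletons f_def finite_S Int_def)
  also have "\<dots> = (\<Sum>s\<in>ternary_lists n. f s)"
    using \<open>0 < m\<close> by (subst sum_ternary_lists_even)
      (auto simp: f_def S_def eliminates_row_uminus not_eliminates_row_replicate_zero)
  also have "\<dots> = 3 ^ zX m n X * (\<Sum>\<alpha>\<in>ternary_lists m. T \<alpha>)"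
    unfolding f_def T_def by (rule count_eliminated)
  also have "\<dots> = 3 ^ zX m n X * ((-2) ^ m + 2 * (\<Sum>\<alpha>\<in>S m. T \<alpha>))"
    by (subst sum_ternary_lists_even)
      (auto simp: T_def S_def zeros_uminus BSp_uminus zeros_replicate_zero BSp_replicate_zero)
  finally have "int (card (\<Inter>i\<in>{..<m}. Elim n {X i})) =
      3 ^ zX m n X * (- ((-2) ^ (m - 1)) + (\<Sum>\<alpha>\<in>S m. T \<alpha>))"
    using \<open>0 < m\<close> by (cases m) (simp_all add: algebra_simps)
  moreover have "T \<alpha> = (-1) ^ zeros \<alpha> * 2 ^ (zeros \<alpha> + card (BSp m n X \<alpha>))" for \<alpha>
    by (simp add: T_def power_add power_mult_distrib[symmetric])
  ultimately show ?thesis by simp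
qed

end
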